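(* Let $F:\mathbb{R}^d\to\mathbb{R}$ be continuously differentiable with $L$-Lipschitz gradient. Consider the simplified curvature-aware Adam iteration described in the context, and suppose the stochastic gradients satisfy, for all $k$, $\mathbb{E}[g_k\mid\theta_k]=\nabla F(\theta_k)$, $\mathbb{E}[\|g_k-\nabla F(\theta_k)\|^2\mid\theta_k]\le\sigma^2$, and $\|g_k\|_\infty\le\|g_k\|\le G$ for a constant $G>0$. Let $D_k:=\operatorname{diag}\big(1/(\sqrt{v_k}+\delta)\big)$, so that $\theta_{k+1}-\theta_k=-\eta D_k m_k$. Then for all $k\ge 0$, $$c_0 I\preceq D_k\preceq \frac{1}{\delta}I,\qquad c_0:=\frac{1}{(1+2C_\alpha)G+\delta},$$ and $$\|\theta_{k+1}-\theta_k\|\le \eta M,\qquad M:=\frac{(1+2C_\alpha)G}{\delta}.$$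
   Context: Simplified curvature-aware Adam iteration: given parameters $\beta_1,\beta_2\in[0,1)$, $\delta>0$, stepsize $\eta>0$, a base coefficient $\alpha_{\mathrm{base}}>0$, and stochastic gradient estimators $g_k$ of $\nabla F(\theta_k)$, the iterates are $\tilde g_k:=g_k+\alpha_k(g_k-g_{k-1})$, $m_k:=\beta_1 m_{k-1}+(1-\beta_1)\tilde g_k$, $v_k:=\beta_2 v_{k-1}+(1-\beta_2)\tilde g_k^{2}$ (coordinatewise), $\theta_{k+1}:=\theta_k-\eta\, m_k/(\sqrt{v_k}+\delta)$ (coordinatewise), with initialization $m_{-1}=0$, $v_{-1}=0$, $\theta_{-1}=\theta_0$, $\alpha_0=0$. The coefficients satisfy $|\alpha_k|\le C_\alpha:=2\alpha_{\mathrm{base}}$ for all $k$. $\|\cdot\|$ is the Euclidean norm and $\preceq$ the Loewner order. *)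

theory Defs
  imports "HOL-Analysis.Analysis"
begin

text \<open>Curvature-corrected gradient: gtilde_k = g_k + alpha_k (g_k - g_(k-1)).
  At k = 0 we have alpha_0 = 0 (and g(0-1) = g 0 in nat arithmetic), so gtilde_0 = g_0.\<close>
definition gtil :: "(nat \<Rightarrow> real) \<Rightarrow> (nat \<Rightarrow> real^'n) \<Rightarrow> nat \<Rightarrow> real^'n" where
  "gtil \<alpha> g k = g k + \<alpha> k *\<^sub>R (g k - g (k - 1))"

fun mseq :: "real \<Rightarrow> (nat \<Rightarrow> real) \<Rightarrow> (nat \<Rightarrow> real^'n) \<Rightarrow> nat \<Rightarrow> real^'n" where
  "mseq \<beta>1 \<alpha> g 0 = \<beta>1 *\<^sub>R 0 + (1 - \<beta>1) *\<^sub>R gtil \<alpha> g 0"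
| "mseq \<beta>1 \<alpha> g (Suc k) = \<beta>1 *\<^sub>R mseq \<beta>1 \<alpha> g k + (1 - \<beta>1) *\<^sub>R gtil \<alpha> g (Suc k)"

definition vsq :: "real^'n \<Rightarrow> real^'n" where
  "vsq x = (\<chi> i. (x $ i)^2)"

fun vseq :: "real \<Rightarrow> (nat \<Rightarrow> real) \<Rightarrow> (nat \<Rightarrow> real^'n) \<Rightarrow> nat \<Rightarrow> real^'n" where
  "vseq \<beta>2 \<alpha> g 0 = \<beta>2 *\<^sub>R 0 + (1 - \<beta>2) *\<^sub>R vsq (gtil \<alpha> g 0)"
| "vseq \<beta>2 \<alpha> g (Suc k) = \<beta>2 *\<^sub>R vseq \<beta>2 \<alpha> g k + (1 - \<beta>2) *\<^sub>R vsq (gtil \<alpha> g (Suc k))"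

fun theta :: "real \<Rightarrow> real \<Rightarrow> real \<Rightarrow> real \<Rightarrow> (nat \<Rightarrow> real) \<Rightarrow> (nat \<Rightarrow> real^'n)
    \<Rightarrow> real^'n \<Rightarrow> nat \<Rightarrow> real^'n" where
  "theta \<eta> \<delta> \<beta>1 \<beta>2 \<alpha> g \<theta>0 0 = \<theta>0"
| "theta \<eta> \<delta> \<beta>1 \<beta>2 \<alpha> g \<theta>0 (Suc k) =
     theta \<eta> \<delta> \<beta>1 \<beta>2 \<alpha> g \<theta>0 k
     - \<eta> *\<^sub>R (\<chi> i. mseq \<beta>1 \<alpha> g k $ i / (sqrt (vseq \<beta>2 \<alpha> g k $ i) + \<delta>))"

definition Dmat :: "real \<Rightarrow> real \<Rightarrow> (nat \<Rightarrow> real) \<Rightarrow> (nat \<Rightarrow> real^'n) \<Rightarrow> nat \<Rightarrow> real^'n^'n" where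
  "Dmat \<delta> \<beta>2 \<alpha> g k =
     (\<chi> i j. if i = j then 1 / (sqrt (vseq \<beta>2 \<alpha> g k $ i) + \<delta>) else 0)"

definition psd :: "real^'n^'n \<Rightarrow> bool" where
  "psd A \<longleftrightarrow> transpose A = A \<and> (\<forall>x. 0 \<le> x \<bullet> (A *v x))"

definition loewner_le :: "real^'n^'n \<Rightarrow> real^'n^'n \<Rightarrow> bool" (infix "\<preceq>\<^sub>L" 50) where
  "A \<preceq>\<^sub>L B \<longleftrightarrow> psd (B - A)"

end

theory Submission
  imports Defs
begin

text \<open>By the triangle inequality the corrected gradients satisfy
  |gtil_k| <= (1 + 2 C_alpha) G =: B. The moments m_k and v_k are exponential moving averages
  started at 0, i.e. sub-convex combinations of the gtil_j and of their squares, so |m_k| <= B and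
  0 <= v_k <= B^2 coordinatewise. Hence every sqrt(v_k) lies in [0, B], which pins the diagonal
  entries of D_k between 1/(B + delta) and 1/delta and gives |theta_(k+1) - theta_k| <= eta |m_k| / delta.\<close>

lemma norm_gtil_le:
  assumes "\<bar>\<alpha> k\<bar> \<le> C" and "\<And>j. norm (g j) \<le> G"
  shows "norm (gtil \<alpha> g k) \<le> (1 + 2 * C) * G"
proof -
  have "norm (g k - g (k - 1)) \<le> 2 * G"
    using norm_triangle_ineq4[of "g k" "g (k - 1)"] assms(2)[of k] assms(2)[of "k - 1"] by linarith
  then have "\<bar>\<alpha> k\<bar> * norm (g k - g (k - 1)) \<le> C * (2 * G)"
    using assms(1) by (meson abs_ge_zero mult_mono norm_ge_zero order.trans)
  moreover have "norm (gtil \<alpha> g k) \<le> norm (g k) + \<bar>\<alpha> k\<bar> * norm (g k - g (k - 1))"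
    unfolding gtil_def by (metis norm_scaleR norm_triangle_ineq)
  ultimately show ?thesis
    using assms(2)[of k] by (simp add: algebra_simps)
qed

lemma norm_mseq_le:
  assumes "0 \<le> \<beta>1" "\<beta>1 \<le> 1" and "\<And>j. norm (gtil \<alpha> g j) \<le> B"
  shows "norm (mseq \<beta>1 \<alpha> g k) \<le> B"
proof -
  have B_nonneg: "0 \<le> B"
    using assms(3)[of 0] norm_ge_zero order_trans by blast
  show ?thesis
  proof (induction k)
    case 0
    have "norm (mseq \<beta>1 \<alpha> g 0) = (1 - \<beta>1) * norm (gtil \<alpha> g 0)"
      using assms(2) by simp
    also have "\<dots> \<le> (1 - \<beta>1) * B"
      using assms by (simp add: mult_left_mono)
    also have "\<dots> \<le> B"
      using B_nonneg assms(1) by (simp add: algebra_simps)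
    finally show ?case .
  next
    case (Suc k)
    have "norm (mseq \<beta>1 \<alpha> g (Suc k))
        \<le> \<beta>1 * norm (mseq \<beta>1 \<alpha> g k) + (1 - \<beta>1) * norm (gtil \<alpha> g (Suc k))"
      using norm_triangle_ineq[of "\<beta>1 *\<^sub>R mseq \<beta>1 \<alpha> g k" "(1 - \<beta>1) *\<^sub>R gtil \<alpha> g (Suc k)"] assms(1,2)
      by simp
    also have "\<dots> \<le> \<beta>1 * B + (1 - \<beta>1) * B"
      using Suc assms by (intro add_mono mult_left_mono) auto
    finally show ?case by (simp add: algebra_simps)
  qed
qed

lemma vseq_bounds:
  assumes "0 \<le> \<beta>2" "\<beta>2 \<le> 1" and "\<And>j. \<bar>gtil \<alpha> g j $ i\<bar> \<le> B"
  shows "0 \<le> vseq \<beta>2 \<alpha> g k $ i \<and> vseq \<beta>2 \<alpha> g k $ i \<le> B\<^sup>2"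
proof -
  have sq: "(gtil \<alpha> g j $ i)\<^sup>2 \<le> B\<^sup>2" for j
    using assms(3)[of j] by (metis abs_ge_zero power2_abs power_mono)
  show ?thesis
  proof (induction k)
    case 0
    have "(1 - \<beta>2) * (gtil \<alpha> g 0 $ i)\<^sup>2 \<le> 1 * B\<^sup>2"
      using sq assms(1,2) by (intro mult_mono) auto
    then show ?case
      using assms(2) by (simp add: vsq_def)
  next
    case (Suc k)
    have step: "vseq \<beta>2 \<alpha> g (Suc k) $ i
        = \<beta>2 * vseq \<beta>2 \<alpha> g k $ i + (1 - \<beta>2) * (gtil \<alpha> g (Suc k) $ i)\<^sup>2"
      by (simp add: vsq_def)
    have "\<beta>2 * vseq \<beta>2 \<alpha> g k $ i + (1 - \<beta>2) * (gtil \<alpha> g (Suc k) $ i)\<^sup>2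
        \<le> \<beta>2 * B\<^sup>2 + (1 - \<beta>2) * B\<^sup>2"
      using Suc sq assms(1,2) by (intro add_mono mult_left_mono) auto
    moreover have "0 \<le> \<beta>2 * vseq \<beta>2 \<alpha> g k $ i + (1 - \<beta>2) * (gtil \<alpha> g (Suc k) $ i)\<^sup>2"
      using Suc assms(1,2) by simp
    ultimately show ?case
      unfolding step by (simp add: algebra_simps)
  qed
qed

lemma sqrt_vseq_bounds:
  assumes "0 \<le> \<beta>2" "\<beta>2 \<le> 1" and "\<And>j. norm (gtil \<alpha> g j) \<le> B"
  shows "0 \<le> sqrt (vseq \<beta>2 \<alpha> g k $ i) \<and> sqrt (vseq \<beta>2 \<alpha> g k $ i) \<le> B"
proof -
  have "\<bar>gtil \<alpha> g j $ i\<bar> \<le> B" for j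
    using component_le_norm_cart[of "gtil \<alpha> g j" i] assms(3)[of j] by linarith
  then have "0 \<le> vseq \<beta>2 \<alpha> g k $ i \<and> vseq \<beta>2 \<alpha> g k $ i \<le> B\<^sup>2"
    using assms(1,2) by (intro vseq_bounds) auto
  moreover have "0 \<le> B"
    using assms(3)[of 0] norm_ge_zero order_trans by blast
  ultimately show ?thesis
    by (metis real_sqrt_ge_zero real_sqrt_le_mono real_sqrt_abs abs_of_nonneg)
qed

definition diag_mat :: "('n::finite \<Rightarrow> real) \<Rightarrow> real^'n^'n" where
  "diag_mat d = (\<chi> i j. if i = j then d i else 0)"

lemma scaleR_mat_1_eq_diag_mat: "c *\<^sub>R mat 1 = diag_mat (\<lambda>_. c)"
  by (simp add: diag_mat_def mat_def vec_eq_iff)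

lemma Dmat_eq_diag_mat: "Dmat \<delta> \<beta>2 \<alpha> g k = diag_mat (\<lambda>i. 1 / (sqrt (vseq \<beta>2 \<alpha> g k $ i) + \<delta>))"
  by (simp add: Dmat_def diag_mat_def)

lemma psd_diag_mat:
  assumes "\<And>i. 0 \<le> d i"
  shows "psd (diag_mat d)"
proof -
  have "diag_mat d *v x = (\<chi> i. d i * x $ i)" for x
    by (simp add: diag_mat_def matrix_vector_mult_def vec_eq_iff
        if_distrib[of "\<lambda>c. c * _"] sum.delta cong: if_cong)
  then have "0 \<le> x \<bullet> (diag_mat d *v x)" for x
    by (simp add: inner_vec_def assms sum_nonneg mult.left_commute)
  moreover have "transpose (diag_mat d) = diag_mat d"
    by (auto simp: diag_mat_def transpose_def vec_eq_iff)
  ultimately show ?thesis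
    unfolding psd_def by blast
qed

lemma loewner_le_diag_mat:
  assumes "\<And>i. d i \<le> e i"
  shows "diag_mat d \<preceq>\<^sub>L diag_mat e"
proof -
  have "diag_mat e - diag_mat d = diag_mat (\<lambda>i. e i - d i)"
    by (auto simp: diag_mat_def vec_eq_iff)
  then show ?thesis
    unfolding loewner_le_def using assms by (simp add: psd_diag_mat)
qed

lemma norm_componentwise_divide_le:
  fixes x :: "real^'n"
  assumes "0 < \<delta>" and "\<And>i. \<delta> \<le> c i"
  shows "norm (\<chi> i. x $ i / c i) \<le> norm x / \<delta>"
proof -
  have "norm (\<chi> i. x $ i / c i) \<le> norm ((1 / \<delta>) *\<^sub>R x)"
  proof (rule norm_le_componentwise_cart)
    fix i
    have "\<bar>x $ i\<bar> / c i \<le> \<bar>x $ i\<bar> / \<delta>"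
      using assms by (intro divide_left_mono) (auto intro: mult_pos_pos less_le_trans)
    then show "norm ((\<chi> i. x $ i / c i) $ i) \<le> norm (((1 / \<delta>) *\<^sub>R x) $ i)"
      using assms(1) assms(2)[of i] by (simp add: abs_div)
  qed
  then show ?thesis
    using assms(1) by simp
qed

lemma norm_theta_step:
  "norm (theta \<eta> \<delta> \<beta>1 \<beta>2 \<alpha> g \<theta>0 (Suc k) - theta \<eta> \<delta> \<beta>1 \<beta>2 \<alpha> g \<theta>0 k)
     = \<bar>\<eta>\<bar> * norm (\<chi> i. mseq \<beta>1 \<alpha> g k $ i / (sqrt (vseq \<beta>2 \<alpha> g k $ i) + \<delta>))"
  by simp

theorem lemma2:
  fixes F :: "real^'d \<Rightarrow> real" and gradF :: "real^'d \<Rightarrow> real^'d" and L :: real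
    and \<beta>1 \<beta>2 \<delta> \<eta> \<alpha>base G :: real
    and \<alpha> :: "nat \<Rightarrow> real" and g :: "nat \<Rightarrow> real^'d" and \<theta>0 :: "real^'d"
  assumes F_grad: "\<And>x. (F has_derivative (\<lambda>h. gradF x \<bullet> h)) (at x)"
    and grad_cont: "continuous_on UNIV gradF"
    and grad_lip: "\<And>x y. norm (gradF x - gradF y) \<le> L * norm (x - y)"
    and \<beta>1: "0 \<le> \<beta>1" "\<beta>1 < 1"
    and \<beta>2: "0 \<le> \<beta>2" "\<beta>2 < 1"
    and \<delta>: "\<delta> > 0" and \<eta>: "\<eta> > 0" and \<alpha>base: "\<alpha>base > 0"
    and \<alpha>0: "\<alpha> 0 = 0"
    and \<alpha>bd: "\<And>k. \<bar>\<alpha> k\<bar> \<le> 2 * \<alpha>base"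
    and G: "G > 0"
    and gbd: "\<And>k. (\<forall>i. \<bar>g k $ i\<bar> \<le> norm (g k)) \<and> norm (g k) \<le> G"
  shows "\<forall>k. (1 / ((1 + 2 * (2 * \<alpha>base)) * G + \<delta>)) *\<^sub>R mat 1 \<preceq>\<^sub>L Dmat \<delta> \<beta>2 \<alpha> g k
           \<and> Dmat \<delta> \<beta>2 \<alpha> g k \<preceq>\<^sub>L (1 / \<delta>) *\<^sub>R mat 1
           \<and> norm (theta \<eta> \<delta> \<beta>1 \<beta>2 \<alpha> g \<theta>0 (Suc k) - theta \<eta> \<delta> \<beta>1 \<beta>2 \<alpha> g \<theta>0 k)
               \<le> \<eta> * ((1 + 2 * (2 * \<alpha>base)) * G / \<delta>)"
proof (intro allI conjI)
  fix k
  define B where "B = (1 + 2 * (2 * \<alpha>base)) * G"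
  have gtil_le: "norm (gtil \<alpha> g j) \<le> B" for j
    unfolding B_def using \<alpha>bd gbd by (intro norm_gtil_le) auto
  have sqrt_v: "0 \<le> sqrt (vseq \<beta>2 \<alpha> g k $ i) \<and> sqrt (vseq \<beta>2 \<alpha> g k $ i) \<le> B" for i
    using \<beta>2 gtil_le by (intro sqrt_vseq_bounds) auto
  show "(1 / (B + \<delta>)) *\<^sub>R mat 1 \<preceq>\<^sub>L Dmat \<delta> \<beta>2 \<alpha> g k"
    unfolding scaleR_mat_1_eq_diag_mat Dmat_eq_diag_mat
    using sqrt_v \<delta> by (intro loewner_le_diag_mat frac_le) (auto simp: add_nonneg_pos)
  show "Dmat \<delta> \<beta>2 \<alpha> g k \<preceq>\<^sub>L (1 / \<delta>) *\<^sub>R mat 1"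
    unfolding scaleR_mat_1_eq_diag_mat Dmat_eq_diag_mat
    using sqrt_v \<delta> by (intro loewner_le_diag_mat frac_le) auto
  have "norm (\<chi> i. mseq \<beta>1 \<alpha> g k $ i / (sqrt (vseq \<beta>2 \<alpha> g k $ i) + \<delta>))
      \<le> norm (mseq \<beta>1 \<alpha> g k) / \<delta>"
    using sqrt_v by (intro norm_componentwise_divide_le[OF \<delta>]) auto
  also have "\<dots> \<le> B / \<delta>"
    using norm_mseq_le[of \<beta>1 \<alpha> g B k] \<beta>1 gtil_le \<delta> by (simp add: divide_right_mono)
  finally show "norm (theta \<eta> \<delta> \<beta>1 \<beta>2 \<alpha> g \<theta>0 (Suc k) - theta \<eta> \<delta> \<beta>1 \<beta>2 \<alpha> g \<theta>0 k) \<le> \<eta> * (B / \<delta>)"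
    unfolding norm_theta_step using \<eta> by (metis abs_of_pos less_imp_le mult_left_mono)
qed

end
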